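(* Let $V$ be the $\mathbb Z$-graded $\mathbb Q$-vector space with basis $\alpha_{i,j}$, $(i,j)\in\mathbb Z^2_{\ge1}$, $|\alpha_{i,j}|=-1-2i-2j$, and $\beta_{i,j}$, $(i,j)\in\mathbb Z^2_{\ge0}\setminus\{(0,0)\}$, $|\beta_{i,j}|=-2-2i-2j$, with the $L_\infty$ structure: $\ell^1(\alpha_{i,j})=j\beta_{i-1,j}-i\beta_{i,j-1}$, $\ell^1(\beta_{i,j})=0$, $\ell^2(\alpha_{i,j},\alpha_{k,l})=(il-jk)\alpha_{i+k,j+l}$, $\ell^2(\alpha_{i,j},\beta_{k,l})=\ell^2(\beta_{k,l},\alpha_{i,j})=(il-jk)\beta_{i+k,j+l}$, $\ell^2(\beta,\beta)=0$, $\ell^k=0$ for $k\ge3$. Let $C_o$ be the abelian $L_\infty$ algebra (all operations zero) with basis $\mathfrak q_m$, $m\ge1$, $|\mathfrak q_m|=-2-2m$. Define $\tilde\epsilon^k:\odot^kV\to C_o$ by $$\tilde\epsilon^k(\beta_{i_1,j_1},\dots,\beta_{i_k,j_k})=\frac{\mathfrak q_{(i_1+j_1)+\cdots+(i_k+j_k)+k-1}}{(i_1+\cdots+i_k)!\,(j_1+\cdots+j_k)!}$$ for all $(i_s,j_s)\in\mathbb Z^2_{\ge0}\setminus\{(0,0)\}$, and $\tilde\epsilon^k=0$ on every input containing some $\alpha_{i,j}$. Then $\tilde\epsilon=(\tilde\epsilon^1,\tilde\epsilon^2,\dots)$ is an $L_\infty$ homomorphism $V\to C_o$.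
   Context: Conventions: for a graded vector space $V$, $\odot^kV$ is the quotient of $V^{\otimes k}$ by the symmetric group acting with Koszul signs, and $\bar SV=\bigoplus_{k\ge1}\odot^kV$. For $\sigma\in\Sigma_k$, $\diamondsuit(\sigma)=(-1)^{\#\{\,|v_a||v_b|\text{ odd}:\ a<b,\ \sigma(a)>\sigma(b)\}}$. An $L_\infty$ algebra is given by degree $1$ maps $\ell^k:\odot^kV\to V$ whose coderivation extension $\hat\ell(v_1\odot\cdots\odot v_k)=\sum_{i=1}^k\sum_{\sigma\in\mathrm{Sh}(i,k-i)}\diamondsuit(\sigma)\,\ell^i(v_{\sigma(1)}\odot\cdots\odot v_{\sigma(i)})\odot v_{\sigma(i+1)}\odot\cdots\odot v_{\sigma(k)}$ satisfies $\hat\ell\circ\hat\ell=0$ (here $\mathrm{Sh}(i,k-i)$ are permutations increasing on $\{1..i\}$ and on $\{i+1..k\}$); the operations $\ell^k$ are graded symmetric and are specified above on basis elements. An $L_\infty$ homomorphism $\Phi:V\to W$ is given by degree $0$ maps $\Phi^k:\odot^kV\to W$ such that the induced coalgebra map $\hat\Phi(v_1\odot\cdots\odot v_k)=\sum_{s\ge1}\sum_{k_1+\cdots+k_s=k,\ k_r\ge1}\sum_{\sigma\in\Sigma_k}\frac{\diamondsuit(\sigma)}{s!\,k_1!\cdots k_s!}(\Phi^{k_1}\odot\cdots\odot\Phi^{k_s})(v_{\sigma(1)}\odot\cdots\odot v_{\sigma(k)})$ satisfies $\hat\Phi\circ\hat\ell_V=\hat\ell_W\circ\hat\Phi$. Since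 $C_o$ is abelian, this means $\hat{\tilde\epsilon}\circ\hat\ell_V=0$. *)

theory Defs
  imports Complex_Main "HOL-Library.Multiset" "HOL-Combinatorics.Permutations"
begin

datatype gen = Alpha nat nat | Beta nat nat

fun valid_gen :: "gen \<Rightarrow> bool" where
  "valid_gen (Alpha i j) = (1 \<le> i \<and> 1 \<le> j)"
| "valid_gen (Beta i j) = ((i, j) \<noteq> (0, 0))"

fun deg :: "gen \<Rightarrow> int" where
  "deg (Alpha i j) = -1 - 2 * int i - 2 * int j"
| "deg (Beta i j) = -2 - 2 * int i - 2 * int j"

definition degC :: "nat \<Rightarrow> int" where
  "degC m = -2 - 2 * int m"

fun l1 :: "gen \<Rightarrow> (rat \<times> gen) list" where
  "l1 (Alpha i j) = [(of_nat j, Beta (i - 1) j), (- of_nat i, Beta i (j - 1))]"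
| "l1 (Beta i j) = []"

fun l2 :: "gen \<Rightarrow> gen \<Rightarrow> (rat \<times> gen) list" where
  "l2 (Alpha i j) (Alpha k l) =
     [(of_int (int i * int l - int j * int k), Alpha (i + k) (j + l))]"
| "l2 (Alpha i j) (Beta k l) =
     [(of_int (int i * int l - int j * int k), Beta (i + k) (j + l))]"
| "l2 (Beta k l) (Alpha i j) =
     [(of_int (int i * int l - int j * int k), Beta (i + k) (j + l))]"
| "l2 (Beta i j) (Beta k l) = []"

fun ellV :: "gen list \<Rightarrow> (rat \<times> gen) list" where
  "ellV [g] = l1 g"
| "ellV [g, h] = l2 g h"
| "ellV _ = []"

definition permute_list :: "(nat \<Rightarrow> nat) \<Rightarrow> 'a list \<Rightarrow> 'a list" where
  "permute_list \<sigma> vs = map (\<lambda>a. vs ! \<sigma> a) [0..<length vs]"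

text \<open>Koszul sign of v_1..v_k |-> v_sigma(1)..v_sigma(k) (0-based positions).\<close>
definition koszul :: "gen list \<Rightarrow> (nat \<Rightarrow> nat) \<Rightarrow> rat" where
  "koszul vs \<sigma> = (-1) ^ card {(a, b). a < b \<and> b < length vs \<and> \<sigma> a > \<sigma> b \<and>
        odd (deg (vs ! \<sigma> a) * deg (vs ! \<sigma> b))}"

definition shuffles :: "nat \<Rightarrow> nat \<Rightarrow> (nat \<Rightarrow> nat) set" where
  "shuffles i k = {\<sigma>. \<sigma> permutes {..<k} \<and> strict_mono_on {..<i} \<sigma> \<and> strict_mono_on {i..<k} \<sigma>}"

text \<open>Elements of C_o: formal linear combinations of q_m, as lists of (coefficient, m).
  Since all q_m have even degree, the symmetric coalgebra of C_o is the polynomial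
  algebra; a monomial q_{m1} .. q_{ms} is the multiset {#m1,..,ms#}.\<close>

fun prodC :: "(rat \<times> nat) list list \<Rightarrow> (rat \<times> nat multiset) list" where
  "prodC [] = [(1, {#})]"
| "prodC (x # xs) = concat (map (\<lambda>(c, m). map (\<lambda>(d, M). (c * d, add_mset m M)) (prodC xs)) x)"

definition coeffS :: "(rat \<times> nat multiset) list \<Rightarrow> nat multiset \<Rightarrow> rat" where
  "coeffS ts M = sum_list (map fst (filter (\<lambda>t. snd t = M) ts))"

definition coeffC :: "(rat \<times> nat) list \<Rightarrow> nat \<Rightarrow> rat" where
  "coeffC ts m = sum_list (map fst (filter (\<lambda>t. snd t = m) ts))"

fun blocks :: "nat list \<Rightarrow> 'a list \<Rightarrow> 'a list list" where
  "blocks [] xs = []"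
| "blocks (n # ns) xs = take n xs # blocks ns (drop n xs)"

definition compositions :: "nat \<Rightarrow> nat list set" where
  "compositions k = {ks. sum_list ks = k \<and> (\<forall>x\<in>set ks. 1 \<le> x)}"

text \<open>Induced coalgebra map Phi-hat on v_1 .. v_k (basis elements); Phi vs = Phi^k(vs).
  Result: coefficient of the monomial M in the symmetric coalgebra of C_o.\<close>
definition Phihat :: "(gen list \<Rightarrow> (rat \<times> nat) list) \<Rightarrow> gen list \<Rightarrow> nat multiset \<Rightarrow> rat" where
  "Phihat Phi vs M =
     (\<Sum>ks\<in>compositions (length vs). \<Sum>\<sigma>\<in>{\<sigma>. \<sigma> permutes {..<length vs}}.
        koszul vs \<sigma> / (of_nat (fact (length ks)) * of_nat (prod_list (map fact ks))) *
        coeffS (prodC (map Phi (blocks ks (permute_list \<sigma> vs)))) M)"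

text \<open>(Phi-hat o l-hat_V)(v_1 .. v_k), using linearity of Phi-hat.\<close>
definition Phihat_lhat :: "(gen list \<Rightarrow> (rat \<times> nat) list) \<Rightarrow> gen list \<Rightarrow> nat multiset \<Rightarrow> rat" where
  "Phihat_lhat Phi vs M =
     (\<Sum>i\<in>{1..length vs}. \<Sum>\<sigma>\<in>shuffles i (length vs).
        koszul vs \<sigma> *
        sum_list (map (\<lambda>(c, g). c * Phihat Phi (g # drop i (permute_list \<sigma> vs)) M)
                      (ellV (take i (permute_list \<sigma> vs)))))"

text \<open>L-infinity homomorphism V -> C_o (C_o abelian, so l-hat of C_o is zero):
  each Phi^k is a degree-0, graded symmetric map into C_o, and Phi-hat o l-hat_V = 0.\<close>
definition Linf_hom_V_Co :: "(gen list \<Rightarrow> (rat \<times> nat) list) \<Rightarrow> bool" where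
  "Linf_hom_V_Co Phi \<longleftrightarrow>
     (\<forall>vs. vs \<noteq> [] \<and> (\<forall>g\<in>set vs. valid_gen g) \<longrightarrow>
        (\<forall>(c, m)\<in>set (Phi vs). c \<noteq> 0 \<longrightarrow> 1 \<le> m \<and> degC m = sum_list (map deg vs)) \<and>
        (\<forall>\<sigma> m. \<sigma> permutes {..<length vs} \<longrightarrow>
            coeffC (Phi (permute_list \<sigma> vs)) m = koszul vs \<sigma> * coeffC (Phi vs) m) \<and>
        (\<forall>M. Phihat_lhat Phi vs M = 0))"

fun is_beta :: "gen \<Rightarrow> bool" where
  "is_beta (Beta i j) = True"
| "is_beta (Alpha i j) = False"

fun idx1 :: "gen \<Rightarrow> nat" where
  "idx1 (Alpha i j) = i" | "idx1 (Beta i j) = i"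

fun idx2 :: "gen \<Rightarrow> nat" where
  "idx2 (Alpha i j) = j" | "idx2 (Beta i j) = j"

definition eps_tilde :: "gen list \<Rightarrow> (rat \<times> nat) list" where
  "eps_tilde vs =
     (if vs \<noteq> [] \<and> (\<forall>g\<in>set vs. is_beta g)
      then [(1 / (of_nat (fact (sum_list (map idx1 vs))) * of_nat (fact (sum_list (map idx2 vs)))),
             sum_list (map (\<lambda>g. idx1 g + idx2 g) vs) + length vs - 1)]
      else [])"

end

theory Submission
  imports Defs "HOL-Combinatorics.Multiset_Permutations"
begin

text \<open>
  Since \<open>C\<^sub>o\<close> is abelian, the claim is \<open>\<epsilon>\<^sup>^ \<circ> \<ell>\<^sup>^ = 0\<close>. All \<open>\<beta>\<close>'s have even degree, \<open>\<epsilon>\<close> vanishes on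
  every input containing an \<open>\<alpha>\<close>, and \<open>\<ell>\<close> never removes an \<open>\<alpha>\<close> except through \<open>\<ell>\<^sup>1\<close> and
  \<open>\<ell>\<^sup>2(\<alpha>, \<beta>)\<close>; so only inputs \<open>\<alpha>\<^sub>a\<^sub>,\<^sub>b, \<beta>\<^sub>1, \<dots>, \<beta>\<^sub>n\<close> with a single \<open>\<alpha>\<close> contribute, and all
  Koszul signs are trivial. On \<open>\<beta>\<close>'s, \<open>\<epsilon>\<^sup>^\<close> is a sum over set partitions of products of
  \<open>\<epsilon>\<close> of the blocks. Grouping the terms of \<open>\<epsilon>\<^sup>^(\<ell>\<^sup>^(\<alpha>\<^sub>a\<^sub>,\<^sub>b, \<beta>\<^sub>1, \<dots>))\<close> by the set \<open>S\<close> of \<open>\<beta>\<close>'s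
  that end up in the block of (the image of) \<open>\<alpha>\<close>, and writing \<open>I\<close>, \<open>J\<close> for the index sums
  over \<open>S\<close>, the coefficient of each such grouping is
  \<open>b / ((a-1+I)! (b+J)!) - a / ((a+I)! (b-1+J)!) + (aJ - bI) / ((a+I)! (b+J)!) = 0\<close>.
  Set partitions are counted as ordered partitions into \<open>s\<close> blocks, and the cancellation
  is proved by induction on \<open>s\<close>, splitting off the first block.
\<close>

lemma prodC_eq_Nil_if_Nil_mem: "[] \<in> set xs \<Longrightarrow> prodC xs = []"
  by (induction xs) auto

text \<open>The coefficient of \<open>M\<close> in \<open>c q\<^sub>m Z\<close>, for \<open>Z\<close> given by its coefficient function.\<close>
definition mult_q :: "rat \<Rightarrow> nat \<Rightarrow> (nat multiset \<Rightarrow> rat) \<Rightarrow> nat multiset \<Rightarrow> rat" where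
  "mult_q c m Z M = (if m \<in># M then c * Z (M - {#m#}) else 0)"

lemma coeffS_map_add_mset:
  "coeffS (map (\<lambda>(d, M'). (c * d, add_mset m M')) ts) M = mult_q c m (coeffS ts) M"
proof (induction ts)
  case Nil
  then show ?case by (simp add: mult_q_def coeffS_def)
next
  case (Cons t ts)
  obtain d N where t: "t = (d, N)" by force
  have "add_mset m N = M \<longleftrightarrow> m \<in># M \<and> N = M - {#m#}"
    by (metis add_mset_remove_trivial insert_DiffM union_single_eq_member)
  then show ?case using Cons t by (auto simp: coeffS_def mult_q_def algebra_simps)
qed

lemma sum_mult_q: "(\<Sum>x\<in>S. mult_q c m (Z x) M) = mult_q c m (\<lambda>M. \<Sum>x\<in>S. Z x M) M"
  by (simp add: mult_q_def sum_distrib_left)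

lemma mult_q_cong: "(\<And>M. Z M = Z' M) \<Longrightarrow> mult_q c m Z M = mult_q c m Z' M"
  by (simp add: mult_q_def)

lemma sum_mult_q_coeff: "(\<Sum>x\<in>S. mult_q (c x) m Z M) = mult_q (\<Sum>x\<in>S. c x) m Z M"
  by (simp add: mult_q_def sum_distrib_right)

lemma mult_mult_q: "a * mult_q c m Z M = mult_q (a * c) m Z M"
  by (simp add: mult_q_def)

lemma even_deg_iff_is_beta: "even (deg g) \<longleftrightarrow> is_beta g"
  by (cases g) auto

lemma is_betaE: "is_beta g \<Longrightarrow> (\<And>i j. g = Beta i j \<Longrightarrow> P) \<Longrightarrow> P"
  by (cases g) auto

lemma koszul_eq_1_if_one_odd:
  assumes "\<sigma> permutes {..<length vs}"
    and "\<And>p q. p < length vs \<Longrightarrow> q < length vs \<Longrightarrow> \<not> is_beta (vs ! p) \<Longrightarrow> \<not> is_beta (vs ! q) \<Longrightarrow> p = q"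
  shows "koszul vs \<sigma> = 1"
proof -
  have E: "{(a, b). a < b \<and> b < length vs \<and> \<sigma> a > \<sigma> b \<and>
        odd (deg (vs ! \<sigma> a) * deg (vs ! \<sigma> b))} = {}"
  proof -
    have False if "a < b" "b < length vs" "\<sigma> b < \<sigma> a"
      and odd: "odd (deg (vs ! \<sigma> a) * deg (vs ! \<sigma> b))" for a b
    proof -
      have "\<sigma> a < length vs" "\<sigma> b < length vs"
        using that permutes_in_image[OF assms(1)] by auto
      moreover have "\<not> is_beta (vs ! \<sigma> a)" "\<not> is_beta (vs ! \<sigma> b)"
        using odd by (auto simp: even_deg_iff_is_beta[symmetric])
      ultimately have "\<sigma> a = \<sigma> b" using assms(2) by blast
      then show False using that by simp
    qed
    then show ?thesis by auto
  qed
  show ?thesis unfolding koszul_def E by simp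
qed

lemma Defs_permute_list_eq [simp]: "Defs.permute_list = Permutations.permute_list"
  by (intro ext) (simp add: Defs.permute_list_def Permutations.permute_list_def)

lemma bij_betw_permutes_permutations_of_set:
  "bij_betw (\<lambda>\<sigma>. map \<sigma> [0..<n]) {\<sigma>. \<sigma> permutes {..<n}} (permutations_of_set {..<n})"
proof (rule bij_betw_byWitness[where f' = "\<lambda>L a. if a < n then L ! a else a"])
  show "\<forall>\<sigma>\<in>{\<sigma>. \<sigma> permutes {..<n}}. (\<lambda>a. if a < n then map \<sigma> [0..<n] ! a else a) = \<sigma>"
  proof
    fix \<sigma> assume "\<sigma> \<in> {\<sigma>. \<sigma> permutes {..<n}}"
    then have "\<sigma> permutes {..<n}" by simp
    then show "(\<lambda>a. if a < n then map \<sigma> [0..<n] ! a else a) = \<sigma>"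
      by (auto simp: permutes_def)
  qed
  show "\<forall>L\<in>permutations_of_set {..<n}. map (\<lambda>a. if a < n then L ! a else a) [0..<n] = L"
  proof
    fix L assume "L \<in> permutations_of_set {..<n}"
    then have "length L = n" using length_finite_permutations_of_set by fastforce
    then show "map (\<lambda>a. if a < n then L ! a else a) [0..<n] = L"
      by (intro nth_equalityI) auto
  qed
  show "(\<lambda>\<sigma>. map \<sigma> [0..<n]) ` {\<sigma>. \<sigma> permutes {..<n}} \<subseteq> permutations_of_set {..<n}"
  proof safe
    fix \<sigma> assume "\<sigma> permutes {..<n}"
    then show "map \<sigma> [0..<n] \<in> permutations_of_set {..<n}"
      by (auto simp: permutations_of_set_def distinct_map permutes_inj_on permutes_image atLeast0LessThan)
  qed
  show "(\<lambda>L a. if a < n then L ! a else a) ` permutations_of_set {..<n} \<subseteq> {\<sigma>. \<sigma> permutes {..<n}}"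
  proof safe
    fix L assume L: "L \<in> permutations_of_set {..<n}"
    then have len: "length L = n" using length_finite_permutations_of_set by fastforce
    have d: "distinct L" "set L = {..<n}" using L by (auto simp: permutations_of_set_def)
    show "(\<lambda>a. if a < n then L ! a else a) permutes {..<n}"
    proof (rule bij_imp_permutes)
      show "bij_betw (\<lambda>a. if a < n then L ! a else a) {..<n} {..<n}"
        unfolding bij_betw_def
      proof
        show "inj_on (\<lambda>a. if a < n then L ! a else a) {..<n}"
          using d len by (auto simp: inj_on_def nth_eq_iff_index_eq)
        have "(\<lambda>a. if a < n then L ! a else a) ` {..<n} = (\<lambda>a. L ! a) ` {..<length L}"
          using len by auto
        also have "\<dots> = set L" by (auto simp: set_conv_nth)
        finally show "(\<lambda>a. if a < n then L ! a else a) ` {..<n} = {..<n}" using d by simp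
      qed
    qed simp
  qed
qed

lemma sum_permutes_permute_list:
  assumes "distinct L0"
  shows "(\<Sum>\<sigma>\<in>{\<sigma>. \<sigma> permutes {..<length L0}}. F (Permutations.permute_list \<sigma> (map v L0)))
       = (\<Sum>L\<in>permutations_of_set (set L0). F (map v L))"
proof -
  let ?n = "length L0"
  have "(\<Sum>\<sigma>\<in>{\<sigma>. \<sigma> permutes {..<?n}}. F (Permutations.permute_list \<sigma> (map v L0)))
      = (\<Sum>\<sigma>\<in>{\<sigma>. \<sigma> permutes {..<?n}}. F (map v (map ((!) L0) (map \<sigma> [0..<?n]))))"
  proof (intro sum.cong refl arg_cong[where f=F])
    fix \<sigma> assume "\<sigma> \<in> {\<sigma>. \<sigma> permutes {..<?n}}"
    then have "\<And>a. a < ?n \<Longrightarrow> \<sigma> a < ?n" using permutes_in_image by fastforce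
    then show "Permutations.permute_list \<sigma> (map v L0) = map v (map ((!) L0) (map \<sigma> [0..<?n]))"
      by (simp add: Permutations.permute_list_def)
  qed
  also have "\<dots> = (\<Sum>L\<in>permutations_of_set {..<?n}. F (map v (map ((!) L0) L)))"
    using sum.reindex_bij_betw[OF bij_betw_permutes_permutations_of_set[of ?n],
        of "\<lambda>L. F (map v (map ((!) L0) L))"] by simp
  also have "\<dots> = (\<Sum>L\<in>map ((!) L0) ` permutations_of_set {..<?n}. F (map v L))"
  proof (rule sum.reindex[symmetric, unfolded comp_def])
    have "inj_on ((!) L0) {..<?n}" using assms by (auto simp: inj_on_def nth_eq_iff_index_eq)
    then show "inj_on (map ((!) L0)) (permutations_of_set {..<?n})"
      by (intro inj_onI) (metis map_inj_on permutations_of_setD(1) sup.idem)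
  qed
  also have "map ((!) L0) ` permutations_of_set {..<?n} = permutations_of_set (((!) L0) ` {..<?n})"
    using assms by (subst permutations_of_set_image_inj) (auto simp: inj_on_def nth_eq_iff_index_eq)
  also have "((!) L0) ` {..<?n} = set L0" by (auto simp: set_conv_nth)
  finally show ?thesis .
qed

lemma sum_permutations_of_set_take_drop:
  assumes "finite X" "k \<le> card X"
  shows "(\<Sum>L\<in>permutations_of_set X. F (take k L) (drop k L))
       = (\<Sum>A\<in>{A. A \<subseteq> X \<and> card A = k}. \<Sum>L1\<in>permutations_of_set A.
            \<Sum>L2\<in>permutations_of_set (X - A). F L1 L2)"
proof -
  let ?S = "SIGMA A:{A. A \<subseteq> X \<and> card A = k}. permutations_of_set A \<times> permutations_of_set (X - A)"
  have "(\<Sum>A\<in>{A. A \<subseteq> X \<and> card A = k}. \<Sum>L1\<in>permutations_of_set A.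
            \<Sum>L2\<in>permutations_of_set (X - A). F L1 L2)
      = (\<Sum>A\<in>{A. A \<subseteq> X \<and> card A = k}.
          \<Sum>p\<in>permutations_of_set A \<times> permutations_of_set (X - A). F (fst p) (snd p))"
    by (subst sum.cartesian_product) (simp add: case_prod_unfold)
  also have "\<dots> = (\<Sum>q\<in>?S. F (fst (snd q)) (snd (snd q)))"
    using assms(1) by (subst sum.Sigma) (auto simp: case_prod_unfold)
  also have "\<dots> = (\<Sum>L\<in>permutations_of_set X. F (take k L) (drop k L))"
  proof (rule sum.reindex_bij_witness[where i = "\<lambda>L. (set (take k L), take k L, drop k L)"
        and j = "\<lambda>q. fst (snd q) @ snd (snd q)"])
    fix q assume qS: "q \<in> ?S"
    obtain A L1 L2 where q: "q = (A, L1, L2)" by (cases q) auto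
    have h: "A \<subseteq> X" "card A = k" "set L1 = A" "distinct L1" "set L2 = X - A" "distinct L2"
      using qS q by (auto simp: permutations_of_set_def)
    have "length L1 = k" using h distinct_card by fastforce
    then show "(set (take k (fst (snd q) @ snd (snd q))), take k (fst (snd q) @ snd (snd q)),
            drop k (fst (snd q) @ snd (snd q))) = q"
      "F (take k (fst (snd q) @ snd (snd q))) (drop k (fst (snd q) @ snd (snd q)))
         = F (fst (snd q)) (snd (snd q))"
      using q h by simp_all
    show "fst (snd q) @ snd (snd q) \<in> permutations_of_set X"
      using q h by (auto simp: permutations_of_set_def)
  next
    fix L assume L: "L \<in> permutations_of_set X"
    then have d: "distinct L" "set L = X" by (auto simp: permutations_of_set_def)
    have "length L = card X" using L length_finite_permutations_of_set by fastforce
    then have "card (set (take k L)) = k" using d assms by (simp add: distinct_card)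
    moreover have "distinct (take k L)" "distinct (drop k L)" "set (take k L) \<inter> set (drop k L) = {}"
      using d distinct_append[of "take k L" "drop k L"] by auto
    moreover have "set (take k L) \<union> set (drop k L) = X"
      using d set_append[of "take k L" "drop k L"] by simp
    ultimately show "(set (take k L), take k L, drop k L) \<in> ?S"
      by (auto simp: permutations_of_set_def)
  qed simp
  finally show ?thesis by simp
qed

lemma map_eq_sorted_list_of_set_if_strict_mono_on:
  fixes \<sigma> :: "nat \<Rightarrow> nat"
  assumes "strict_mono_on {m..<n} \<sigma>"
  shows "map \<sigma> [m..<n] = sorted_list_of_set (\<sigma> ` {m..<n})"
proof -
  have "sorted_wrt (<) (map \<sigma> [m..<n])"
    unfolding sorted_wrt_iff_nth_less
  proof (intro allI impI)
    fix i j assume ij: "i < j" "j < length (map \<sigma> [m..<n])"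
    then have "m + i \<in> {m..<n}" "m + j \<in> {m..<n}" "m + i < m + j" by auto
    then have "\<sigma> (m + i) < \<sigma> (m + j)" using assms unfolding strict_mono_on_def by blast
    then show "map \<sigma> [m..<n] ! i < map \<sigma> [m..<n] ! j" using ij by simp
  qed
  then show ?thesis
    using strict_sorted_equal[of "map \<sigma> [m..<n]" "sorted_list_of_set (\<sigma> ` {m..<n})"]
    by (simp add: strict_sorted_list_of_set)
qed

lemma shufflesD:
  assumes "\<sigma> \<in> Defs.shuffles i k" "i \<le> k"
  shows "map \<sigma> [0..<i] = sorted_list_of_set (\<sigma> ` {..<i})"
    and "map \<sigma> [i..<k] = sorted_list_of_set ({..<k} - \<sigma> ` {..<i})"
    and "\<sigma> ` {..<i} \<subseteq> {..<k}" "card (\<sigma> ` {..<i}) = i"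
proof -
  have p: "\<sigma> permutes {..<k}" and m1: "strict_mono_on {..<i} \<sigma>" and m2: "strict_mono_on {i..<k} \<sigma>"
    using assms by (auto simp: shuffles_def)
  show "map \<sigma> [0..<i] = sorted_list_of_set (\<sigma> ` {..<i})"
    using map_eq_sorted_list_of_set_if_strict_mono_on[of 0 i \<sigma>] m1 by (simp add: atLeast0LessThan)
  have inj: "inj_on \<sigma> {..<k}" using p by (simp add: permutes_inj_on)
  have u: "{..<k} = {..<i} \<union> {i..<k}" using assms(2) by auto
  then have "\<sigma> ` {..<i} \<union> \<sigma> ` {i..<k} = {..<k}" using p by (metis image_Un permutes_image)
  moreover have "\<sigma> ` {..<i} \<inter> \<sigma> ` {i..<k} = {}"
    using inj_on_image_Int[OF inj, of "{..<i}" "{i..<k}"] u by auto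
  ultimately have "\<sigma> ` {i..<k} = {..<k} - \<sigma> ` {..<i}" by blast
  then show "map \<sigma> [i..<k] = sorted_list_of_set ({..<k} - \<sigma> ` {..<i})"
    using map_eq_sorted_list_of_set_if_strict_mono_on[OF m2] by simp
  show "\<sigma> ` {..<i} \<subseteq> {..<k}" using \<open>\<sigma> ` {..<i} \<union> \<sigma> ` {i..<k} = {..<k}\<close> by auto
  have "inj_on \<sigma> {..<i}" using inj u by (auto intro: inj_on_subset)
  then show "card (\<sigma> ` {..<i}) = i" by (simp add: card_image)
qed

lemma inj_on_shuffles_image:
  assumes "i \<le> k"
  shows "inj_on (\<lambda>\<sigma>. \<sigma> ` {..<i}) (Defs.shuffles i k)"
proof (rule inj_onI)
  fix \<sigma> \<tau> assume s: "\<sigma> \<in> Defs.shuffles i k" and t: "\<tau> \<in> Defs.shuffles i k"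
    and e: "\<sigma> ` {..<i} = \<tau> ` {..<i}"
  have "[0..<k] = [0..<i] @ [i..<k]" using assms upt_add_eq_append[of 0 i "k - i"] by simp
  then have "map \<sigma> [0..<k] = map \<tau> [0..<k]"
    using shufflesD(1,2)[OF s assms] shufflesD(1,2)[OF t assms] e by simp
  then have "\<sigma> x = \<tau> x" if "x < k" for x using that by (simp add: map_eq_conv)
  moreover have "\<sigma> x = \<tau> x" if "\<not> x < k" for x
    using that s t by (auto simp: shuffles_def permutes_def)
  ultimately show "\<sigma> = \<tau>" by blast
qed

lemma shuffle_with_image:
  assumes A: "A \<subseteq> {..<k}" "card A = i"
  obtains \<sigma> where "\<sigma> \<in> Defs.shuffles i k" "\<sigma> ` {..<i} = A"
proof -
  define LA where "LA = sorted_list_of_set A"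
  define LB where "LB = sorted_list_of_set ({..<k} - A)"
  have fA: "finite A" using A finite_subset by auto
  have ik: "i \<le> k" using A card_mono[of "{..<k}" A] by simp
  have lA: "length LA = i" using A fA by (simp add: LA_def)
  have lB: "length LB = k - i" using A fA by (simp add: LB_def card_Diff_subset)
  define \<sigma> where "\<sigma> x = (if x < i then LA ! x else if x < k then LB ! (x - i) else x)" for x
  have m: "map \<sigma> [0..<k] = LA @ LB"
    using lA lB ik by (intro nth_equalityI) (auto simp: \<sigma>_def nth_append)
  have "distinct (map \<sigma> [0..<k])" "set (map \<sigma> [0..<k]) = {..<k}"
    unfolding m using fA A by (auto simp: LA_def LB_def)
  then have "inj_on \<sigma> {..<k}" "\<sigma> ` {..<k} = {..<k}"
    by (simp_all add: distinct_map atLeast0LessThan)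
  then have "bij_betw \<sigma> {..<k} {..<k}" by (simp add: bij_betw_def)
  then have p: "\<sigma> permutes {..<k}"
    by (rule bij_imp_permutes) (use ik in \<open>simp add: \<sigma>_def\<close>)
  have sLA: "sorted_wrt (<) LA" "sorted_wrt (<) LB"
    by (simp_all add: LA_def LB_def strict_sorted_list_of_set)
  have "strict_mono_on {..<i} \<sigma>"
    using sLA(1) lA unfolding strict_mono_on_def sorted_wrt_iff_nth_less by (auto simp: \<sigma>_def)
  moreover have "strict_mono_on {i..<k} \<sigma>"
    using sLA(2) lB unfolding strict_mono_on_def sorted_wrt_iff_nth_less
    by (auto simp: \<sigma>_def)
  moreover have "\<sigma> ` {..<i} = (\<lambda>x. LA ! x) ` {..<length LA}" using lA by (auto simp: \<sigma>_def)
  then have "\<sigma> ` {..<i} = set LA" by (auto simp: set_conv_nth)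
  then have "\<sigma> ` {..<i} = A" using fA by (simp add: LA_def)
  ultimately show thesis using p by (intro that) (simp_all add: shuffles_def)
qed

lemma bij_betw_shuffles_subsets:
  assumes "i \<le> k"
  shows "bij_betw (\<lambda>\<sigma>. \<sigma> ` {..<i}) (Defs.shuffles i k) {A. A \<subseteq> {..<k} \<and> card A = i}"
  unfolding bij_betw_def
proof
  show "inj_on (\<lambda>\<sigma>. \<sigma> ` {..<i}) (Defs.shuffles i k)" using assms by (rule inj_on_shuffles_image)
  show "(\<lambda>\<sigma>. \<sigma> ` {..<i}) ` Defs.shuffles i k = {A. A \<subseteq> {..<k} \<and> card A = i}"
    using shufflesD(3,4)[OF _ assms] shuffle_with_image by (auto simp: image_iff) metis
qed

lemma length_le_sum_list: "\<forall>x\<in>set ks. 1 \<le> x \<Longrightarrow> length ks \<le> sum_list (ks :: nat list)"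
  by (induction ks) auto

lemma finite_compositions: "finite (compositions n)"
proof -
  have "compositions n \<subseteq> {ks. set ks \<subseteq> {..n} \<and> length ks \<le> n}"
    using length_le_sum_list member_le_sum_list by (fastforce simp: compositions_def)
  then show ?thesis using finite_lists_length_le[of "{..n}" n] finite_subset by blast
qed

definition compositions_of_length :: "nat \<Rightarrow> nat \<Rightarrow> nat list set" where
  "compositions_of_length n s = {ks \<in> compositions n. length ks = s}"

lemma finite_compositions_of_length: "finite (compositions_of_length n s)"
  unfolding compositions_of_length_def using finite_compositions by simp

lemma sum_compositions_of_length_Suc:
  "(\<Sum>ks\<in>compositions_of_length n (Suc s). f ks)
     = (\<Sum>k\<in>{1..n}. \<Sum>ks\<in>compositions_of_length (n - k) s. f (k # ks))"
proof -
  have "(\<Sum>k\<in>{1..n}. \<Sum>ks\<in>compositions_of_length (n - k) s. f (k # ks))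
      = (\<Sum>p\<in>(SIGMA k:{1..n}. compositions_of_length (n - k) s). f (fst p # snd p))"
    by (subst sum.Sigma) (auto simp: finite_compositions_of_length case_prod_unfold)
  also have "\<dots> = (\<Sum>ks\<in>compositions_of_length n (Suc s). f ks)"
  proof (rule sum.reindex_bij_witness[where i = "\<lambda>ks. (hd ks, tl ks)" and j = "\<lambda>p. fst p # snd p"])
    fix ks assume ks: "ks \<in> compositions_of_length n (Suc s)"
    then obtain k ks' where "ks = k # ks'" by (cases ks) (auto simp: compositions_of_length_def)
    then show "fst (hd ks, tl ks) # snd (hd ks, tl ks) = ks"
      "(hd ks, tl ks) \<in> (SIGMA k:{1..n}. compositions_of_length (n - k) s)"
      using ks by (auto simp: compositions_of_length_def compositions_def)
  qed (auto simp: compositions_of_length_def compositions_def)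
  finally show ?thesis ..
qed

lemma sum_compositions_by_length:
  "(\<Sum>ks\<in>compositions n. f ks) = (\<Sum>s\<le>n. \<Sum>ks\<in>compositions_of_length n s. f ks)"
proof -
  have "compositions n = (\<Union>s\<in>{..n}. compositions_of_length n s)"
    using length_le_sum_list by (auto simp: compositions_of_length_def compositions_def)
  then show ?thesis
    by (simp only:) (rule sum.UNION_disjoint,
        auto simp: finite_compositions_of_length[unfolded compositions_of_length_def]
          compositions_of_length_def)
qed

lemma sum_nonempty_subsets_by_card:
  assumes "finite X"
  shows "(\<Sum>A\<in>{A. A \<subseteq> X \<and> A \<noteq> {}}. h A) = (\<Sum>k\<in>{1..card X}. \<Sum>A\<in>{A. A \<subseteq> X \<and> card A = k}. h A)"
proof -
  have "{A. A \<subseteq> X \<and> A \<noteq> {}} = (\<Union>k\<in>{1..card X}. {A. A \<subseteq> X \<and> card A = k})"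
    using assms by (auto simp: card_mono Suc_le_eq card_gt_0_iff dest: finite_subset)
  then show ?thesis
    by (simp only:) (rule sum.UNION_disjoint, auto simp: assms)
qed

section \<open>The coalgebra map on \<beta>'s: ordered partitions\<close>

definition eps_coeff :: "(nat \<Rightarrow> gen) \<Rightarrow> nat set \<Rightarrow> rat" where
  "eps_coeff v A = 1 / (of_nat (fact (\<Sum>j\<in>A. idx1 (v j))) * of_nat (fact (\<Sum>j\<in>A. idx2 (v j))))"

definition eps_index :: "(nat \<Rightarrow> gen) \<Rightarrow> nat set \<Rightarrow> nat" where
  "eps_index v A = (\<Sum>j\<in>A. idx1 (v j) + idx2 (v j)) + card A - 1"

lemma eps_tilde_map_distinct:
  assumes "distinct L" "L \<noteq> []" "\<forall>j\<in>set L. is_beta (v j)"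
  shows "eps_tilde (map v L) = [(eps_coeff v (set L), eps_index v (set L))]"
  using assms
  by (simp add: eps_tilde_def eps_coeff_def eps_index_def sum_list_distinct_conv_sum_set
      distinct_card)

lemma eps_coeff_cong: "(\<And>j. j \<in> X \<Longrightarrow> v j = v' j) \<Longrightarrow> eps_coeff v X = eps_coeff v' X"
  by (simp add: eps_coeff_def cong: sum.cong)

lemma eps_index_cong: "(\<And>j. j \<in> X \<Longrightarrow> v j = v' j) \<Longrightarrow> eps_index v X = eps_index v' X"
  by (simp add: eps_index_def cong: sum.cong)

definition fact_weight :: "(nat \<Rightarrow> gen) \<Rightarrow> nat \<Rightarrow> nat \<Rightarrow> nat set \<Rightarrow> rat" where
  "fact_weight v x y T =
     1 / (of_nat (fact (x + (\<Sum>j\<in>T. idx1 (v j)))) * of_nat (fact (y + (\<Sum>j\<in>T. idx2 (v j)))))"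

lemma eps_coeff_insert_upd:
  assumes "finite T" "z \<notin> T"
  shows "eps_coeff (v(z := Beta x y)) (insert z T) = fact_weight v x y T"
proof -
  have "(\<Sum>j\<in>T. idx1 ((v(z := Beta x y)) j)) = (\<Sum>j\<in>T. idx1 (v j))"
       "(\<Sum>j\<in>T. idx2 ((v(z := Beta x y)) j)) = (\<Sum>j\<in>T. idx2 (v j))"
    using assms by (auto intro!: sum.cong)
  then show ?thesis using assms by (simp add: eps_coeff_def fact_weight_def)
qed

lemma eps_index_insert_upd:
  assumes "finite T" "z \<notin> T"
  shows "eps_index (v(z := Beta x y)) (insert z T)
       = x + y + (\<Sum>j\<in>T. idx1 (v j) + idx2 (v j)) + card T"
proof -
  have "(\<Sum>j\<in>T. idx1 ((v(z := Beta x y)) j) + idx2 ((v(z := Beta x y)) j))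
      = (\<Sum>j\<in>T. idx1 (v j) + idx2 (v j))"
    using assms by (intro sum.cong) auto
  then show ?thesis using assms by (simp add: eps_index_def)
qed

lemma concat_blocks: "concat (blocks ks xs) = take (sum_list ks) xs"
  by (induction ks arbitrary: xs) (auto simp: take_add)

lemma Phihat_eps_tilde_eq_0_if_alpha:
  assumes "g \<in> set ws" "\<not> is_beta g"
  shows "Phihat eps_tilde ws M = 0"
  unfolding Phihat_def
proof (intro sum.neutral ballI)
  fix ks \<sigma> assume ks: "ks \<in> compositions (length ws)" and "\<sigma> \<in> {\<sigma>. \<sigma> permutes {..<length ws}}"
  then have "g \<in> set (concat (blocks ks (Permutations.permute_list \<sigma> ws)))"
    using assms by (simp add: concat_blocks compositions_def)
  then obtain b where b: "b \<in> set (blocks ks (Permutations.permute_list \<sigma> ws))" "g \<in> set b"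
    by auto
  have "eps_tilde b = []" using b assms by (auto simp: eps_tilde_def)
  then have "prodC (map eps_tilde (blocks ks (Permutations.permute_list \<sigma> ws))) = []"
    using b by (intro prodC_eq_Nil_if_Nil_mem) force
  then show "koszul ws \<sigma> / (of_nat (fact (length ks)) * of_nat (prod_list (map fact ks))) *
      coeffS (prodC (map eps_tilde (blocks ks (Defs.permute_list \<sigma> ws)))) M = 0"
    by (simp add: coeffS_def)
qed

definition block_sum :: "(nat \<Rightarrow> gen) \<Rightarrow> nat list \<Rightarrow> nat set \<Rightarrow> nat multiset \<Rightarrow> rat" where
  "block_sum v ks X M =
     (\<Sum>L\<in>permutations_of_set X. coeffS (prodC (map eps_tilde (blocks ks (map v L)))) M)"

text \<open>
  The coefficient of \<open>M\<close> in the sum, over all ordered partitions \<open>(A\<^sub>1, \<dots>, A\<^sub>s)\<close> of \<open>X\<close>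
  into nonempty blocks, of \<open>\<Prod>\<^sub>i eps_coeff v A\<^sub>i q\<^bsub>eps_index v A\<^sub>i\<^esub>\<close>: such a partition
  arises from \<open>\<Prod>\<^sub>i |A\<^sub>i|!\<close> pairs of an enumeration of \<open>X\<close> and a composition of block sizes.
\<close>
definition partition_sum :: "(nat \<Rightarrow> gen) \<Rightarrow> nat \<Rightarrow> nat set \<Rightarrow> nat multiset \<Rightarrow> rat" where
  "partition_sum v s X M = (\<Sum>ks\<in>compositions_of_length (card X) s.
     block_sum v ks X M / of_nat (prod_list (map fact ks)))"

lemma block_sum_Cons:
  assumes X: "finite X" "1 \<le> k" "k \<le> card X" "\<forall>j\<in>X. is_beta (v j)"
  shows "block_sum v (k # ks) X M = (\<Sum>A\<in>{A. A \<subseteq> X \<and> card A = k}.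
            of_nat (fact k) * mult_q (eps_coeff v A) (eps_index v A) (block_sum v ks (X - A)) M)"
proof -
  let ?G = "\<lambda>L M. coeffS (prodC (map eps_tilde (blocks ks (map v L)))) M"
  have "block_sum v (k # ks) X M = (\<Sum>L\<in>permutations_of_set X.
      (\<lambda>L1 L2. mult_q (eps_coeff v (set L1)) (eps_index v (set L1)) (?G L2) M)
        (take k L) (drop k L))"
    unfolding block_sum_def
  proof (intro sum.cong refl)
    fix L assume L: "L \<in> permutations_of_set X"
    then have d: "distinct L" "set L = X" by (auto simp: permutations_of_set_def)
    have "length L = card X" using L length_finite_permutations_of_set by fastforce
    then have "eps_tilde (map v (take k L))
        = [(eps_coeff v (set (take k L)), eps_index v (set (take k L)))]"
      using d X by (intro eps_tilde_map_distinct) (auto dest: in_set_takeD)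
    then show "coeffS (prodC (map eps_tilde (blocks (k # ks) (map v L)))) M
        = mult_q (eps_coeff v (set (take k L))) (eps_index v (set (take k L)))
            (?G (drop k L)) M"
      by (simp add: take_map drop_map coeffS_map_add_mset)
  qed
  also have "\<dots> = (\<Sum>A\<in>{A. A \<subseteq> X \<and> card A = k}. \<Sum>L1\<in>permutations_of_set A.
      \<Sum>L2\<in>permutations_of_set (X - A).
        mult_q (eps_coeff v (set L1)) (eps_index v (set L1)) (?G L2) M)"
    by (rule sum_permutations_of_set_take_drop[OF X(1) X(3)])
  also have "\<dots> = (\<Sum>A\<in>{A. A \<subseteq> X \<and> card A = k}.
      of_nat (fact k) * mult_q (eps_coeff v A) (eps_index v A) (block_sum v ks (X - A)) M)"
  proof (intro sum.cong refl)
    fix A assume A: "A \<in> {A. A \<subseteq> X \<and> card A = k}"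
    have "set L1 = A" if "L1 \<in> permutations_of_set A" for L1
      using that by (simp add: permutations_of_set_def)
    then have "(\<Sum>L1\<in>permutations_of_set A. \<Sum>L2\<in>permutations_of_set (X - A).
        mult_q (eps_coeff v (set L1)) (eps_index v (set L1)) (?G L2) M)
      = (\<Sum>L1\<in>permutations_of_set A. mult_q (eps_coeff v A) (eps_index v A) (block_sum v ks (X - A)) M)"
      by (simp add: sum_mult_q block_sum_def[abs_def])
    also have "\<dots> = of_nat (fact k) * mult_q (eps_coeff v A) (eps_index v A) (block_sum v ks (X - A)) M"
      using A X(1) finite_subset[of A X] by simp
    finally show "(\<Sum>L1\<in>permutations_of_set A. \<Sum>L2\<in>permutations_of_set (X - A).
        mult_q (eps_coeff v (set L1)) (eps_index v (set L1)) (?G L2) M)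
      = of_nat (fact k) * mult_q (eps_coeff v A) (eps_index v A) (block_sum v ks (X - A)) M" .
  qed
  finally show ?thesis .
qed

lemma partition_sum_Suc:
  assumes X: "finite X" "\<forall>j\<in>X. is_beta (v j)"
  shows "partition_sum v (Suc s) X M = (\<Sum>A\<in>{A. A \<subseteq> X \<and> A \<noteq> {}}.
      mult_q (eps_coeff v A) (eps_index v A) (partition_sum v s (X - A)) M)"
proof -
  let ?n = "card X"
  let ?rest = "\<lambda>A ks M. block_sum v ks (X - A) M / of_nat (prod_list (map fact ks))"
  have "partition_sum v (Suc s) X M = (\<Sum>k\<in>{1..?n}. \<Sum>ks\<in>compositions_of_length (?n - k) s.
      block_sum v (k # ks) X M / (of_nat (fact k) * of_nat (prod_list (map fact ks))))"
    unfolding partition_sum_def sum_compositions_of_length_Suc by simp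
  also have "\<dots> = (\<Sum>k\<in>{1..?n}. \<Sum>ks\<in>compositions_of_length (?n - k) s.
      \<Sum>A\<in>{A. A \<subseteq> X \<and> card A = k}. mult_q (eps_coeff v A) (eps_index v A) (?rest A ks) M)"
    using X by (auto simp: block_sum_Cons sum_divide_distrib mult_q_def intro!: sum.cong)
  also have "\<dots> = (\<Sum>k\<in>{1..?n}. \<Sum>A\<in>{A. A \<subseteq> X \<and> card A = k}.
      \<Sum>ks\<in>compositions_of_length (?n - k) s.
        mult_q (eps_coeff v A) (eps_index v A) (?rest A ks) M)"
    by (intro sum.cong refl sum.swap)
  also have "\<dots> = (\<Sum>k\<in>{1..?n}. \<Sum>A\<in>{A. A \<subseteq> X \<and> card A = k}.
      mult_q (eps_coeff v A) (eps_index v A) (partition_sum v s (X - A)) M)"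
  proof (intro sum.cong refl)
    fix k A assume "A \<in> {A. A \<subseteq> X \<and> card A = k}"
    then have "card (X - A) = ?n - k" using X(1) by (auto simp: card_Diff_subset finite_subset)
    then show "(\<Sum>ks\<in>compositions_of_length (?n - k) s.
        mult_q (eps_coeff v A) (eps_index v A) (?rest A ks) M)
      = mult_q (eps_coeff v A) (eps_index v A) (partition_sum v s (X - A)) M"
      by (simp add: sum_mult_q partition_sum_def[abs_def])
  qed
  also have "\<dots> = (\<Sum>A\<in>{A. A \<subseteq> X \<and> A \<noteq> {}}.
      mult_q (eps_coeff v A) (eps_index v A) (partition_sum v s (X - A)) M)"
    by (rule sum_nonempty_subsets_by_card[OF X(1), symmetric])
  finally show ?thesis .
qed

lemma partition_sum_0: "finite X \<Longrightarrow> X \<noteq> {} \<Longrightarrow> partition_sum v 0 X M = 0"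
proof -
  assume "finite X" "X \<noteq> {}"
  then have "compositions_of_length (card X) 0 = {}"
    by (auto simp: compositions_of_length_def compositions_def)
  then show ?thesis by (simp add: partition_sum_def)
qed

lemma partition_sum_eq_0_if_card_less: "card X < s \<Longrightarrow> partition_sum v s X M = 0"
proof -
  assume "card X < s"
  then have "compositions_of_length (card X) s = {}"
    using length_le_sum_list by (fastforce simp: compositions_of_length_def compositions_def)
  then show ?thesis by (simp add: partition_sum_def)
qed

lemma partition_sum_cong:
  assumes "\<And>j. j \<in> X \<Longrightarrow> v j = v' j"
  shows "partition_sum v s X M = partition_sum v' s X M"
proof -
  have "map v L = map v' L" if "L \<in> permutations_of_set X" for L
    using that assms by (auto simp: permutations_of_set_def)
  then have "block_sum v ks X M = block_sum v' ks X M" for ks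
    unfolding block_sum_def by (intro sum.cong refl) metis
  then show ?thesis by (simp add: partition_sum_def)
qed

lemma Phihat_eps_tilde_eq_block_sums:
  assumes L: "distinct L" "\<forall>j\<in>set L. is_beta (v j)"
  shows "Phihat eps_tilde (map v L) M = (\<Sum>ks\<in>compositions (length L).
      block_sum v ks (set L) M / (of_nat (fact (length ks)) * of_nat (prod_list (map fact ks))))"
  unfolding Phihat_def length_map
proof (intro sum.cong refl)
  fix ks
  let ?G = "\<lambda>xs. coeffS (prodC (map eps_tilde (blocks ks xs))) M"
  let ?c = "of_nat (fact (length ks)) * of_nat (prod_list (map fact ks)) :: rat"
  have "koszul (map v L) \<sigma> = 1" if "\<sigma> permutes {..<length L}" for \<sigma>
    using that L by (intro koszul_eq_1_if_one_odd) auto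
  then have "(\<Sum>\<sigma>\<in>{\<sigma>. \<sigma> permutes {..<length L}}.
        koszul (map v L) \<sigma> / ?c * ?G (Defs.permute_list \<sigma> (map v L)))
      = (\<Sum>\<sigma>\<in>{\<sigma>. \<sigma> permutes {..<length L}}. ?G (Permutations.permute_list \<sigma> (map v L))) / ?c"
    by (simp add: sum_divide_distrib)
  also have "\<dots> = block_sum v ks (set L) M / ?c"
    using sum_permutes_permute_list[OF L(1), of ?G v] by (simp add: block_sum_def)
  finally show "(\<Sum>\<sigma>\<in>{\<sigma>. \<sigma> permutes {..<length L}}.
        koszul (map v L) \<sigma> / ?c * ?G (Defs.permute_list \<sigma> (map v L))) = block_sum v ks (set L) M / ?c" .
qed

lemma Phihat_eps_tilde_eq_partition_sums:
  assumes L: "distinct L" "\<forall>j\<in>set L. is_beta (v j)"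
  shows "Phihat eps_tilde (map v L) M
       = (\<Sum>s\<le>length L. partition_sum v s (set L) M / of_nat (fact s))"
proof -
  have "card (set L) = length L" using L(1) by (simp add: distinct_card)
  then show ?thesis
    unfolding Phihat_eps_tilde_eq_block_sums[OF L] sum_compositions_by_length
      partition_sum_def sum_divide_distrib
    by (intro sum.cong refl)
      (auto simp: compositions_of_length_def field_simps)
qed

lemma sum_partition_sums_eq:
  assumes "card X \<le> n"
  shows "(\<Sum>s\<le>n. partition_sum v s X M / of_nat (fact s))
       = (\<Sum>s\<le>card X. partition_sum v s X M / of_nat (fact s))"
  using assms by (intro sum.mono_neutral_right) (auto simp: partition_sum_eq_0_if_card_less)

section \<open>Cancellation for a single \<alpha>\<close>

lemma sum_nonempty_subsets_insert:
  assumes "finite Y" "z \<notin> Y"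
  shows "(\<Sum>A\<in>{A. A \<subseteq> insert z Y \<and> A \<noteq> {}}. f A)
       = (\<Sum>T\<in>Pow Y. f (insert z T)) + (\<Sum>A\<in>{A. A \<subseteq> Y \<and> A \<noteq> {}}. f A)"
proof -
  have "A \<in> insert z ` Pow Y" if "A \<subseteq> insert z Y" "z \<in> A" for A
    using that by (intro image_eqI[of _ _ "A - {z}"]) auto
  then have "{A. A \<subseteq> insert z Y \<and> A \<noteq> {}} = insert z ` Pow Y \<union> {A. A \<subseteq> Y \<and> A \<noteq> {}}"
    by (auto simp: subset_insert_iff)
  moreover have "insert z ` Pow Y \<inter> {A. A \<subseteq> Y \<and> A \<noteq> {}} = {}" using assms by auto
  moreover have "inj_on (insert z) (Pow Y)"
    using assms by (intro inj_onI) (metis Pow_iff insert_ident subset_iff)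
  ultimately show ?thesis
    using assms by (simp add: sum.union_disjoint sum.reindex)
qed

abbreviation partition_sum_upd ::
    "(nat \<Rightarrow> gen) \<Rightarrow> nat \<Rightarrow> gen \<Rightarrow> nat \<Rightarrow> nat set \<Rightarrow> nat multiset \<Rightarrow> rat" where
  "partition_sum_upd v z y s Y \<equiv> partition_sum (v(z := y)) s (insert z Y)"

abbreviation first_block_term ::
    "(nat \<Rightarrow> gen) \<Rightarrow> nat \<Rightarrow> gen \<Rightarrow> nat \<Rightarrow> nat set \<Rightarrow> nat set \<Rightarrow> nat multiset \<Rightarrow> rat" where
  "first_block_term v z y s Y T M \<equiv> mult_q (eps_coeff (v(z := y)) (insert z T))
     (eps_index (v(z := y)) (insert z T)) (partition_sum v s (Y - T)) M"

lemma partition_sum_upd_Suc: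
  assumes Y: "finite Y" "z \<notin> Y" "\<forall>j\<in>Y. is_beta (v j)" "is_beta y"
  shows "partition_sum_upd v z y (Suc s) Y M =
     (\<Sum>T\<in>Pow Y. first_block_term v z y s Y T M)
   + (\<Sum>A\<in>{A. A \<subseteq> Y \<and> A \<noteq> {}}.
       mult_q (eps_coeff v A) (eps_index v A) (partition_sum_upd v z y s (Y - A)) M)"
proof -
  let ?v = "v(z := y)"
  have "partition_sum_upd v z y (Suc s) Y M = (\<Sum>A\<in>{A. A \<subseteq> insert z Y \<and> A \<noteq> {}}.
      mult_q (eps_coeff ?v A) (eps_index ?v A) (partition_sum ?v s (insert z Y - A)) M)"
    using Y by (intro partition_sum_Suc) auto
  also have "\<dots> = (\<Sum>T\<in>Pow Y.
        mult_q (eps_coeff ?v (insert z T)) (eps_index ?v (insert z T))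
          (partition_sum ?v s (insert z Y - insert z T)) M)
    + (\<Sum>A\<in>{A. A \<subseteq> Y \<and> A \<noteq> {}}.
        mult_q (eps_coeff ?v A) (eps_index ?v A) (partition_sum ?v s (insert z Y - A)) M)"
    by (rule sum_nonempty_subsets_insert[OF Y(1,2)])
  also have "(\<Sum>T\<in>Pow Y.
        mult_q (eps_coeff ?v (insert z T)) (eps_index ?v (insert z T))
          (partition_sum ?v s (insert z Y - insert z T)) M)
      = (\<Sum>T\<in>Pow Y. first_block_term v z y s Y T M)"
  proof (intro sum.cong refl mult_q_cong)
    fix T M' assume "T \<in> Pow Y"
    then have "insert z Y - insert z T = Y - T" using Y by auto
    then show "partition_sum ?v s (insert z Y - insert z T) M' = partition_sum v s (Y - T) M'"
      using Y by (auto intro: partition_sum_cong)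
  qed
  also have "(\<Sum>A\<in>{A. A \<subseteq> Y \<and> A \<noteq> {}}.
        mult_q (eps_coeff ?v A) (eps_index ?v A) (partition_sum ?v s (insert z Y - A)) M)
      = (\<Sum>A\<in>{A. A \<subseteq> Y \<and> A \<noteq> {}}.
        mult_q (eps_coeff v A) (eps_index v A) (partition_sum_upd v z y s (Y - A)) M)"
  proof (intro sum.cong refl)
    fix A assume "A \<in> {A. A \<subseteq> Y \<and> A \<noteq> {}}"
    then have zA: "z \<notin> A" using Y by auto
    then have "eps_coeff ?v A = eps_coeff v A" "eps_index ?v A = eps_index v A"
      by (auto intro!: eps_coeff_cong eps_index_cong)
    moreover have "insert z Y - A = insert z (Y - A)" using zA by auto
    ultimately show "mult_q (eps_coeff ?v A) (eps_index ?v A) (partition_sum ?v s (insert z Y - A)) M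
        = mult_q (eps_coeff v A) (eps_index v A) (partition_sum_upd v z y s (Y - A)) M"
      by simp
  qed
  finally show ?thesis .
qed

lemma factorial_identity:
  fixes a b I J :: nat
  assumes "1 \<le> a" "1 \<le> b"
  shows "of_nat b / (of_nat (fact (a - 1 + I)) * of_nat (fact (b + J)))
       - of_nat a / (of_nat (fact (a + I)) * of_nat (fact (b - 1 + J)))
       + of_int (int a * int J - int b * int I) / (of_nat (fact (a + I)) * of_nat (fact (b + J)))
     = (0::rat)"
proof -
  obtain a' b' where ab: "a = Suc a'" "b = Suc b'" using assms by (metis Suc_le_D One_nat_def)
  have fa: "(of_nat (fact (a + I)) :: rat) = of_nat (a + I) * of_nat (fact (a - 1 + I))"
    and fb: "(of_nat (fact (b + J)) :: rat) = of_nat (b + J) * of_nat (fact (b - 1 + J))"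
    using ab by (simp_all add: fact_Suc algebra_simps)
  have common_denominator: "FA \<noteq> 0 \<Longrightarrow> FB \<noteq> 0 \<Longrightarrow> x \<noteq> 0 \<Longrightarrow> y \<noteq> 0 \<Longrightarrow>
      p / (FA * (y * FB)) - q / ((x * FA) * FB) + r / ((x * FA) * (y * FB))
      = (p * x - q * y + r) / (x * y * FA * FB)" for FA FB x y p q r :: rat
    by (simp add: field_simps)
  have "of_nat b * of_nat (a + I) - of_nat a * of_nat (b + J) + of_int (int a * int J - int b * int I)
      = (0::rat)"
    by (simp add: algebra_simps)
  then show ?thesis
    unfolding fa fb using ab by (subst common_denominator) simp_all
qed

text \<open>\<open>\<ell>\<^sup>2(\<alpha>\<^sub>a\<^sub>,\<^sub>b, g) = bracket_coeff a b g \<cdot> bracket_gen a b g\<close> for every \<open>\<beta>\<close> \<open>g\<close>.\<close>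
definition bracket_coeff :: "nat \<Rightarrow> nat \<Rightarrow> gen \<Rightarrow> rat" where
  "bracket_coeff a b g = of_int (int a * int (idx2 g) - int b * int (idx1 g))"

definition bracket_gen :: "nat \<Rightarrow> nat \<Rightarrow> gen \<Rightarrow> gen" where
  "bracket_gen a b g = Beta (a + idx1 g) (b + idx2 g)"

lemma sum_bracket_coeff:
  "finite S \<Longrightarrow> (\<Sum>t\<in>S. bracket_coeff a b (v t)) =
     of_nat a * of_nat (\<Sum>j\<in>S. idx2 (v j)) - of_nat b * of_nat (\<Sum>j\<in>S. idx1 (v j))"
  by (simp add: bracket_coeff_def of_nat_sum sum_subtractf sum_distrib_left)

lemma fact_weight_identity:
  assumes "finite S" "1 \<le> a" "1 \<le> b"
  shows "of_nat b * fact_weight v (a - 1) b S - of_nat a * fact_weight v a (b - 1) S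
       + (\<Sum>t\<in>S. bracket_coeff a b (v t)) * fact_weight v a b S = 0"
  using factorial_identity[OF assms(2,3), of "\<Sum>j\<in>S. idx1 (v j)" "\<Sum>j\<in>S. idx2 (v j)"]
  by (simp add: fact_weight_def sum_bracket_coeff[OF assms(1)])

lemma sum_Pow_remove_insert:
  assumes "finite Y"
  shows "(\<Sum>t\<in>Y. \<Sum>T\<in>Pow (Y - {t}). f t (insert t T)) = (\<Sum>S\<in>Pow Y. \<Sum>t\<in>S. f t S)"
proof -
  have "(\<Sum>T\<in>Pow (Y - {t}). f t (insert t T)) = (\<Sum>S\<in>{S \<in> Pow Y. t \<in> S}. f t S)" if "t \<in> Y" for t
  proof (rule sum.reindex_bij_witness[where i = "\<lambda>S. S - {t}" and j = "insert t"])
    fix S assume "S \<in> {S \<in> Pow Y. t \<in> S}"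
    then show "insert t (S - {t}) = S" "S - {t} \<in> Pow (Y - {t})" by auto
  qed (use that in auto)
  then have "(\<Sum>t\<in>Y. \<Sum>T\<in>Pow (Y - {t}). f t (insert t T))
      = (\<Sum>t\<in>Y. \<Sum>S\<in>{S \<in> Pow Y. t \<in> S}. f t S)" by simp
  also have "\<dots> = (\<Sum>S\<in>Pow Y. \<Sum>t\<in>{t \<in> Y. t \<in> S}. f t S)"
    using assms by (intro sum.swap_restrict) auto
  also have "\<dots> = (\<Sum>S\<in>Pow Y. \<Sum>t\<in>S. f t S)"
    by (intro sum.cong refl) auto
  finally show ?thesis .
qed

lemma sum_first_block_term_Beta:
  assumes "finite Y" "z \<notin> Y"
  shows "(\<Sum>T\<in>Pow Y. first_block_term v z (Beta x y) s Y T M)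
       = (\<Sum>T\<in>Pow Y. mult_q (fact_weight v x y T)
           (x + y + (\<Sum>j\<in>T. idx1 (v j) + idx2 (v j)) + card T) (partition_sum v s (Y - T)) M)"
proof (intro sum.cong refl)
  fix T assume "T \<in> Pow Y"
  then have "finite T" "z \<notin> T" using assms finite_subset by auto
  then show "first_block_term v z (Beta x y) s Y T M = mult_q (fact_weight v x y T)
      (x + y + (\<Sum>j\<in>T. idx1 (v j) + idx2 (v j)) + card T) (partition_sum v s (Y - T)) M"
    by (simp add: eps_coeff_insert_upd eps_index_insert_upd)
qed

lemma sum_bracket_first_block_terms:
  assumes Y: "finite Y" "z \<notin> Y"
  shows "(\<Sum>t\<in>Y. bracket_coeff a b (v t) *
           (\<Sum>T\<in>Pow (Y - {t}). first_block_term v z (bracket_gen a b (v t)) s (Y - {t}) T M))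
       = (\<Sum>S\<in>Pow Y. mult_q ((\<Sum>t\<in>S. bracket_coeff a b (v t)) * fact_weight v a b S)
           (a + b + (\<Sum>j\<in>S. idx1 (v j) + idx2 (v j)) + card S - 1) (partition_sum v s (Y - S)) M)"
proof -
  let ?f = "\<lambda>t S. mult_q (bracket_coeff a b (v t) * fact_weight v a b S)
    (a + b + (\<Sum>j\<in>S. idx1 (v j) + idx2 (v j)) + card S - 1) (partition_sum v s (Y - S)) M"
  have "bracket_coeff a b (v t) *
      (\<Sum>T\<in>Pow (Y - {t}). first_block_term v z (bracket_gen a b (v t)) s (Y - {t}) T M)
    = (\<Sum>T\<in>Pow (Y - {t}). ?f t (insert t T))" if "t \<in> Y" for t
  proof -
    have "finite (Y - {t})" "z \<notin> Y - {t}" using Y by auto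
    note first_blocks = sum_first_block_term_Beta[OF this]
    have T: "finite T \<and> t \<notin> T \<and> Y - {t} - T = Y - insert t T" if "T \<in> Pow (Y - {t})" for T
      using that Y finite_subset by auto
    show ?thesis
      unfolding bracket_gen_def first_blocks sum_distrib_left mult_mult_q
      by (intro sum.cong refl) (drule T, simp add: fact_weight_def ac_simps)
  qed
  then have "(\<Sum>t\<in>Y. bracket_coeff a b (v t) *
      (\<Sum>T\<in>Pow (Y - {t}). first_block_term v z (bracket_gen a b (v t)) s (Y - {t}) T M))
    = (\<Sum>S\<in>Pow Y. \<Sum>t\<in>S. ?f t S)"
    using sum_Pow_remove_insert[OF Y(1)] by simp
  then show ?thesis by (simp add: sum_mult_q_coeff sum_distrib_right)
qed

lemma first_block_terms_cancel:
  assumes Y: "finite Y" "z \<notin> Y" and ab: "1 \<le> a" "1 \<le> b"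
  shows "of_nat b * (\<Sum>T\<in>Pow Y. first_block_term v z (Beta (a - 1) b) s Y T M)
       - of_nat a * (\<Sum>T\<in>Pow Y. first_block_term v z (Beta a (b - 1)) s Y T M)
       + (\<Sum>t\<in>Y. bracket_coeff a b (v t) *
           (\<Sum>T\<in>Pow (Y - {t}). first_block_term v z (bracket_gen a b (v t)) s (Y - {t}) T M))
     = 0"
proof -
  let ?idx = "\<lambda>S. a + b + (\<Sum>j\<in>S. idx1 (v j) + idx2 (v j)) + card S - 1"
  let ?P = "\<lambda>S. partition_sum v s (Y - S)"
  have first: "of_nat b * (\<Sum>T\<in>Pow Y. first_block_term v z (Beta (a - 1) b) s Y T M)
      = (\<Sum>S\<in>Pow Y. mult_q (of_nat b * fact_weight v (a - 1) b S) (?idx S) (?P S) M)"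
    and second: "of_nat a * (\<Sum>T\<in>Pow Y. first_block_term v z (Beta a (b - 1)) s Y T M)
      = (\<Sum>S\<in>Pow Y. mult_q (of_nat a * fact_weight v a (b - 1) S) (?idx S) (?P S) M)"
    unfolding sum_first_block_term_Beta[OF Y] sum_distrib_left mult_mult_q
    using ab by (auto intro!: sum.cong)
  have "(\<Sum>S\<in>Pow Y. mult_q (of_nat b * fact_weight v (a - 1) b S - of_nat a * fact_weight v a (b - 1) S
      + (\<Sum>t\<in>S. bracket_coeff a b (v t)) * fact_weight v a b S) (?idx S) (?P S) M) = 0"
    using Y(1) fact_weight_identity[OF _ ab]
    by (intro sum.neutral) (auto simp: mult_q_def finite_subset)
  then show ?thesis
    unfolding first second sum_bracket_first_block_terms[OF Y]
      sum_subtractf[symmetric] sum.distrib[symmetric]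
    by (simp add: mult_q_def algebra_simps if_distrib cong: if_cong)
qed

text \<open>
  The part of \<open>\<epsilon>\<^sup>^(\<ell>\<^sup>^(\<alpha>\<^sub>a\<^sub>,\<^sub>b, v|\<^sub>Y))\<close> with \<open>s\<close> blocks, \<open>\<alpha>\<^sub>a\<^sub>,\<^sub>b\<close> sitting at position \<open>z\<close>:
  the two terms of \<open>\<ell>\<^sup>1(\<alpha>\<^sub>a\<^sub>,\<^sub>b)\<close> and the terms \<open>\<ell>\<^sup>2(\<alpha>\<^sub>a\<^sub>,\<^sub>b, v t)\<close>.
\<close>
definition lhat_alpha_part ::
    "nat \<Rightarrow> nat \<Rightarrow> (nat \<Rightarrow> gen) \<Rightarrow> nat \<Rightarrow> nat \<Rightarrow> nat set \<Rightarrow> nat multiset \<Rightarrow> rat" where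
  "lhat_alpha_part a b v z s Y M =
     of_nat b * partition_sum_upd v z (Beta (a - 1) b) s Y M
   - of_nat a * partition_sum_upd v z (Beta a (b - 1)) s Y M
   + (\<Sum>t\<in>Y. bracket_coeff a b (v t) * partition_sum_upd v z (bracket_gen a b (v t)) s (Y - {t}) M)"

lemma later_block_terms:
  assumes "finite Y"
  shows "of_nat b * (\<Sum>A\<in>{A. A \<subseteq> Y \<and> A \<noteq> {}}.
           mult_q (eps_coeff v A) (eps_index v A) (partition_sum_upd v z (Beta (a - 1) b) s (Y - A)) M)
       - of_nat a * (\<Sum>A\<in>{A. A \<subseteq> Y \<and> A \<noteq> {}}.
           mult_q (eps_coeff v A) (eps_index v A) (partition_sum_upd v z (Beta a (b - 1)) s (Y - A)) M)
       + (\<Sum>t\<in>Y. bracket_coeff a b (v t) * (\<Sum>A\<in>{A. A \<subseteq> Y - {t} \<and> A \<noteq> {}}.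
           mult_q (eps_coeff v A) (eps_index v A)
             (partition_sum_upd v z (bracket_gen a b (v t)) s (Y - {t} - A)) M))
     = (\<Sum>A\<in>{A. A \<subseteq> Y \<and> A \<noteq> {}}.
           mult_q (eps_coeff v A) (eps_index v A) (lhat_alpha_part a b v z s (Y - A)) M)"
proof -
  let ?P = "{A. A \<subseteq> Y \<and> A \<noteq> {}}"
  let ?f = "\<lambda>t A. bracket_coeff a b (v t) * mult_q (eps_coeff v A) (eps_index v A)
    (partition_sum_upd v z (bracket_gen a b (v t)) s (Y - A - {t})) M"
  have "{A. A \<subseteq> Y - {t} \<and> A \<noteq> {}} = {A \<in> ?P. t \<notin> A}" for t by auto
  moreover have "Y - {t} - A = Y - A - {t}" for t A by blast
  ultimately have "(\<Sum>t\<in>Y. bracket_coeff a b (v t) * (\<Sum>A\<in>{A. A \<subseteq> Y - {t} \<and> A \<noteq> {}}.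
        mult_q (eps_coeff v A) (eps_index v A)
          (partition_sum_upd v z (bracket_gen a b (v t)) s (Y - {t} - A)) M))
      = (\<Sum>t\<in>Y. \<Sum>A\<in>{A \<in> ?P. t \<notin> A}. ?f t A)"
    by (simp add: sum_distrib_left)
  also have "\<dots> = (\<Sum>A\<in>?P. \<Sum>t\<in>{t \<in> Y. t \<notin> A}. ?f t A)"
    using assms by (intro sum.swap_restrict) auto
  also have "\<dots> = (\<Sum>A\<in>?P. \<Sum>t\<in>Y - A. ?f t A)"
    by (intro sum.cong refl) (auto intro: arg_cong[where f="\<lambda>X. sum _ X"])
  finally have bracket_terms: "(\<Sum>t\<in>Y. bracket_coeff a b (v t) * (\<Sum>A\<in>{A. A \<subseteq> Y - {t} \<and> A \<noteq> {}}.
        mult_q (eps_coeff v A) (eps_index v A)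
          (partition_sum_upd v z (bracket_gen a b (v t)) s (Y - {t} - A)) M))
      = (\<Sum>A\<in>?P. \<Sum>t\<in>Y - A. ?f t A)" .
  have "mult_q c m (lhat_alpha_part a b v z s X) M =
     of_nat b * mult_q c m (partition_sum_upd v z (Beta (a - 1) b) s X) M
   - of_nat a * mult_q c m (partition_sum_upd v z (Beta a (b - 1)) s X) M
   + (\<Sum>t\<in>X. bracket_coeff a b (v t) *
       mult_q c m (partition_sum_upd v z (bracket_gen a b (v t)) s (X - {t})) M)" for c m X
    by (simp add: mult_q_def lhat_alpha_part_def sum_distrib_left algebra_simps)
  then show ?thesis
    unfolding bracket_terms
    unfolding sum_distrib_left sum_subtractf[symmetric] sum.distrib[symmetric]
    by simp
qed

lemma lhat_alpha_part_eq_0: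
  assumes B: "finite B" "z \<notin> B" "\<forall>j\<in>B. is_beta (v j)" and ab: "1 \<le> a" "1 \<le> b"
  shows "Y \<subseteq> B \<Longrightarrow> lhat_alpha_part a b v z s Y M = 0"
proof (induction s arbitrary: Y M)
  case 0
  have "finite (insert z Y)" "finite (insert z (Y - {t}))" for t using 0 B finite_subset by auto
  then show ?case by (simp add: lhat_alpha_part_def partition_sum_0)
next
  case (Suc s)
  have Y: "finite Y" "z \<notin> Y" "\<forall>j\<in>Y. is_beta (v j)" using Suc.prems B finite_subset by auto
  have Yt: "finite (Y - {t})" "z \<notin> Y - {t}" "\<forall>j\<in>Y - {t}. is_beta (v j)" for t using Y by auto
  have "lhat_alpha_part a b v z s (Y - A) M' = 0" if "A \<subseteq> Y" for A M'
    using that Suc.prems by (intro Suc.IH) auto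
  then have "(\<Sum>A\<in>{A. A \<subseteq> Y \<and> A \<noteq> {}}.
      mult_q (eps_coeff v A) (eps_index v A) (lhat_alpha_part a b v z s (Y - A)) M) = 0"
    by (intro sum.neutral) (auto simp: mult_q_def)
  then show ?case
    using first_block_terms_cancel[OF Y(1,2) ab, of v s M] later_block_terms[OF Y(1), of b v z a s M]
    unfolding lhat_alpha_part_def
    by (simp add: partition_sum_upd_Suc[OF Y] partition_sum_upd_Suc[OF Yt]
        bracket_gen_def sum.distrib algebra_simps)
qed

text \<open>The summand of \<open>Phihat_lhat\<close> for the shuffle that feeds the entries indexed by \<open>A\<close> to \<open>\<ell>\<close>.\<close>
definition lhat_term :: "gen list \<Rightarrow> nat set \<Rightarrow> nat multiset \<Rightarrow> rat" where
  "lhat_term vs A M = sum_list (map (\<lambda>(c, g).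
      c * Phihat eps_tilde (g # map ((!) vs) (sorted_list_of_set ({..<length vs} - A))) M)
    (ellV (map ((!) vs) (sorted_list_of_set A))))"

lemma Phihat_lhat_eq_sum_lhat_term:
  assumes koszul: "\<And>i \<sigma>. \<sigma> \<in> Defs.shuffles i (length vs) \<Longrightarrow> koszul vs \<sigma> = 1"
  shows "Phihat_lhat eps_tilde vs M
       = (\<Sum>i\<in>{1..length vs}. \<Sum>A\<in>{A. A \<subseteq> {..<length vs} \<and> card A = i}. lhat_term vs A M)"
  unfolding Phihat_lhat_def
proof (intro sum.cong refl)
  fix i assume "i \<in> {1..length vs}"
  then have ik: "i \<le> length vs" by simp
  have "koszul vs \<sigma> * sum_list (map (\<lambda>(c, g).
        c * Phihat eps_tilde (g # drop i (Defs.permute_list \<sigma> vs)) M)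
        (ellV (take i (Defs.permute_list \<sigma> vs)))) = lhat_term vs (\<sigma> ` {..<i}) M"
    if s: "\<sigma> \<in> Defs.shuffles i (length vs)" for \<sigma>
  proof -
    have "take i (Permutations.permute_list \<sigma> vs) = map ((!) vs) (sorted_list_of_set (\<sigma> ` {..<i}))"
      "drop i (Permutations.permute_list \<sigma> vs)
         = map ((!) vs) (sorted_list_of_set ({..<length vs} - \<sigma> ` {..<i}))"
      using shufflesD(1,2)[OF s ik, symmetric] ik
      by (simp_all add: Permutations.permute_list_def take_map drop_map)
    then show ?thesis by (simp add: koszul[OF s] lhat_term_def)
  qed
  then have "(\<Sum>\<sigma>\<in>Defs.shuffles i (length vs). koszul vs \<sigma> * sum_list (map (\<lambda>(c, g).
        c * Phihat eps_tilde (g # drop i (Defs.permute_list \<sigma> vs)) M)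
        (ellV (take i (Defs.permute_list \<sigma> vs)))))
      = (\<Sum>\<sigma>\<in>Defs.shuffles i (length vs). lhat_term vs (\<sigma> ` {..<i}) M)"
    by (rule sum.cong[OF refl])
  also have "\<dots> = (\<Sum>A\<in>{A. A \<subseteq> {..<length vs} \<and> card A = i}. lhat_term vs A M)"
    by (rule sum.reindex_bij_betw[OF bij_betw_shuffles_subsets[OF ik]])
  finally show "(\<Sum>\<sigma>\<in>Defs.shuffles i (length vs). koszul vs \<sigma> * sum_list (map (\<lambda>(c, g).
        c * Phihat eps_tilde (g # drop i (Defs.permute_list \<sigma> vs)) M)
        (ellV (take i (Defs.permute_list \<sigma> vs)))))
      = (\<Sum>A\<in>{A. A \<subseteq> {..<length vs} \<and> card A = i}. lhat_term vs A M)" .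
qed

lemma ellV_eq_Nil_if_betas: "\<forall>x\<in>set xs. is_beta x \<Longrightarrow> ellV xs = []"
proof (induction xs rule: ellV.induct)
  case (1 g) then show ?case by (cases g) auto
next
  case (2 g h) then show ?case by (cases g; cases h) auto
qed auto

lemma ellV_eq_Nil_if_long: "3 \<le> length xs \<Longrightarrow> ellV xs = []"
  by (induction xs rule: ellV.induct) auto

lemma ellV_keeps_alpha:
  assumes "length (filter (\<lambda>g. \<not> is_beta g) (xs @ ys)) \<noteq> 1" "(c, g) \<in> set (ellV xs)"
  shows "\<not> is_beta g \<or> (\<exists>y\<in>set ys. \<not> is_beta y)"
proof (rule ccontr)
  assume "\<not> (\<not> is_beta g \<or> (\<exists>y\<in>set ys. \<not> is_beta y))"
  then have g: "is_beta g" and ys: "filter (\<lambda>g. \<not> is_beta g) ys = []"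
    by (auto simp: filter_empty_conv)
  show False
  proof (cases xs rule: ellV.cases)
    case (1 x)
    then show False using assms g ys by (cases x) auto
  next
    case (2 x y)
    then show False using assms g ys by (cases x; cases y) auto
  qed (use assms in auto)
qed

lemma sorted_list_of_set_pair: "(x::nat) < y \<Longrightarrow> sorted_list_of_set {x, y} = [x, y]"
  using strict_sorted_equal[of "sorted_list_of_set {x, y}" "[x, y]"]
    strict_sorted_list_of_set[of "{x,y}"]
  by simp

lemma Phihat_eps_tilde_Cons_betas:
  assumes X: "X \<subseteq> {..<length vs}" "card X < length vs" "\<forall>j\<in>X. is_beta (vs ! j)"
    and g: "is_beta g"
  shows "Phihat eps_tilde (g # map ((!) vs) (sorted_list_of_set X)) M
       = (\<Sum>s\<le>length vs. partition_sum_upd ((!) vs) (length vs) g s X M / of_nat (fact s))"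
proof -
  let ?k = "length vs"
  let ?v = "((!) vs)(?k := g)"
  let ?L = "?k # sorted_list_of_set X"
  have fX: "finite X" using X finite_subset by auto
  have kX: "?k \<notin> X" using X by auto
  have "map ?v ?L = g # map ((!) vs) (sorted_list_of_set X)"
    using X fX by (auto intro!: map_cong)
  then have "Phihat eps_tilde (g # map ((!) vs) (sorted_list_of_set X)) M
      = (\<Sum>s\<le>length ?L. partition_sum ?v s (set ?L) M / of_nat (fact s))"
    using X fX kX g by (subst Phihat_eps_tilde_eq_partition_sums[symmetric]) auto
  also have "\<dots> = (\<Sum>s\<le>card (insert ?k X). partition_sum ?v s (insert ?k X) M / of_nat (fact s))"
    using fX kX by simp
  also have "\<dots> = (\<Sum>s\<le>?k. partition_sum ?v s (insert ?k X) M / of_nat (fact s))"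
    using fX kX X by (intro sum_partition_sums_eq[symmetric]) auto
  finally show ?thesis .
qed

lemma ellV_pair_alpha_beta:
  assumes "t \<noteq> p" "vs ! p = Alpha a b" "is_beta (vs ! t)"
  shows "ellV (map ((!) vs) (sorted_list_of_set {p, t}))
       = [(bracket_coeff a b (vs ! t), bracket_gen a b (vs ! t))]"
proof -
  obtain k l where t: "vs ! t = Beta k l" using assms(3) by (rule is_betaE)
  show ?thesis
  proof (cases "p < t")
    case True
    then show ?thesis using assms t by (simp add: sorted_list_of_set_pair bracket_coeff_def bracket_gen_def)
  next
    case False
    then have "sorted_list_of_set {p, t} = [t, p]"
      using assms(1) sorted_list_of_set_pair[of t p] by (simp add: insert_commute)
    then show ?thesis using assms t by (simp add: bracket_coeff_def bracket_gen_def)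
  qed
qed

context
  fixes vs :: "gen list" and p a b :: nat
  assumes alpha: "p < length vs" "vs ! p = Alpha a b"
    and betas: "\<forall>q<length vs. q \<noteq> p \<longrightarrow> is_beta (vs ! q)"
begin

lemma lhat_term_eq_0_if_betas:
  assumes "A \<subseteq> {..<length vs}" "p \<notin> A"
  shows "lhat_term vs A M = 0"
proof -
  have "finite A" using assms(1) finite_subset by auto
  then have "ellV (map ((!) vs) (sorted_list_of_set A)) = []"
    using assms betas by (intro ellV_eq_Nil_if_betas) auto
  then show ?thesis by (simp add: lhat_term_def)
qed

lemma sum_lhat_term_singletons:
  "(\<Sum>A\<in>{A. A \<subseteq> {..<length vs} \<and> card A = 1}. lhat_term vs A M)
   = of_nat b * Phihat eps_tilde
       (Beta (a - 1) b # map ((!) vs) (sorted_list_of_set ({..<length vs} - {p}))) M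
   - of_nat a * Phihat eps_tilde
       (Beta a (b - 1) # map ((!) vs) (sorted_list_of_set ({..<length vs} - {p}))) M"
proof -
  have "(\<Sum>A\<in>{A. A \<subseteq> {..<length vs} \<and> card A = 1}. lhat_term vs A M)
      = (\<Sum>A\<in>{{p}}. lhat_term vs A M)"
  proof (rule sum.mono_neutral_right)
    have "lhat_term vs {q} M = 0" if "q < length vs" "q \<noteq> p" for q
      using that by (intro lhat_term_eq_0_if_betas) auto
    then show "\<forall>A\<in>{A. A \<subseteq> {..<length vs} \<and> card A = 1} - {{p}}. lhat_term vs A M = 0"
      by (auto simp: card_1_singleton_iff)
  qed (use alpha in auto)
  then show ?thesis using alpha by (simp add: lhat_term_def)
qed

lemma sum_lhat_term_pairs:
  "(\<Sum>A\<in>{A. A \<subseteq> {..<length vs} \<and> card A = 2}. lhat_term vs A M)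
   = (\<Sum>t\<in>{..<length vs} - {p}. bracket_coeff a b (vs ! t) * Phihat eps_tilde
       (bracket_gen a b (vs ! t) # map ((!) vs) (sorted_list_of_set ({..<length vs} - {p} - {t}))) M)"
proof -
  let ?B = "{..<length vs} - {p}"
  have "(\<Sum>A\<in>{A. A \<subseteq> {..<length vs} \<and> card A = 2}. lhat_term vs A M)
      = (\<Sum>A\<in>(\<lambda>t. {p, t}) ` ?B. lhat_term vs A M)"
  proof (rule sum.mono_neutral_right)
    show "(\<lambda>t. {p, t}) ` ?B \<subseteq> {A. A \<subseteq> {..<length vs} \<and> card A = 2}" using alpha by auto
    have "p \<notin> A" if "A \<subseteq> {..<length vs}" "card A = 2" "A \<notin> (\<lambda>t. {p, t}) ` ?B" for A
      using that by (auto simp: card_2_iff doubleton_eq_iff image_iff)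
    then show "\<forall>A\<in>{A. A \<subseteq> {..<length vs} \<and> card A = 2} - (\<lambda>t. {p, t}) ` ?B.
        lhat_term vs A M = 0"
      by (auto intro: lhat_term_eq_0_if_betas)
  qed simp
  also have "\<dots> = (\<Sum>t\<in>?B. lhat_term vs {p, t} M)"
    by (rule sum.reindex[unfolded comp_def]) (auto simp: inj_on_def doubleton_eq_iff)
  also have "\<dots> = (\<Sum>t\<in>?B. bracket_coeff a b (vs ! t) * Phihat eps_tilde
       (bracket_gen a b (vs ! t) # map ((!) vs) (sorted_list_of_set (?B - {t}))) M)"
  proof (intro sum.cong refl)
    fix t assume t: "t \<in> ?B"
    then have "{..<length vs} - {p, t} = ?B - {t}" by auto
    then show "lhat_term vs {p, t} M = bracket_coeff a b (vs ! t) * Phihat eps_tilde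
       (bracket_gen a b (vs ! t) # map ((!) vs) (sorted_list_of_set (?B - {t}))) M"
      unfolding lhat_term_def using t alpha betas by (subst ellV_pair_alpha_beta) auto
  qed
  finally show ?thesis .
qed

lemma sum_lhat_term_eq_1_2:
  "(\<Sum>i\<in>{1..length vs}. \<Sum>A\<in>{A. A \<subseteq> {..<length vs} \<and> card A = i}. lhat_term vs A M)
   = (\<Sum>A\<in>{A. A \<subseteq> {..<length vs} \<and> card A = 1}. lhat_term vs A M)
   + (\<Sum>A\<in>{A. A \<subseteq> {..<length vs} \<and> card A = 2}. lhat_term vs A M)"
proof -
  let ?k = "length vs"
  let ?G = "\<lambda>i. \<Sum>A\<in>{A. A \<subseteq> {..<?k} \<and> card A = i}. lhat_term vs A M"
  have long: "?G i = 0" if "3 \<le> i" for i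
  proof (intro sum.neutral ballI)
    fix A assume A: "A \<in> {A. A \<subseteq> {..<?k} \<and> card A = i}"
    then have "finite A" using finite_subset by auto
    then show "lhat_term vs A M = 0"
      using A that by (simp add: lhat_term_def ellV_eq_Nil_if_long)
  qed
  have "?G 2 = 0" if "?k < 2"
  proof -
    have empty: "{A. A \<subseteq> {..<?k} \<and> card A = 2} = {}"
    proof safe
      fix A assume "A \<subseteq> {..<?k}" "card A = 2"
      then have "card A \<le> card {..<?k}" by (intro card_mono) auto
      then show "A \<in> {}" using \<open>card A = 2\<close> \<open>?k < 2\<close> by simp
    qed
    show ?thesis unfolding empty by simp
  qed
  then have "(\<Sum>i\<in>{1..?k}. ?G i) = (\<Sum>i\<in>{1..?k} \<union> {1, 2}. ?G i)"
    using alpha(1) by (intro sum.mono_neutral_left) auto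
  also have "\<dots> = (\<Sum>i\<in>{1, 2}. ?G i)"
    using long by (intro sum.mono_neutral_right) auto
  finally show ?thesis by simp
qed

lemma sum_lhat_term_1_2_eq_lhat_alpha_part:
  "(\<Sum>A\<in>{A. A \<subseteq> {..<length vs} \<and> card A = 1}. lhat_term vs A M)
   + (\<Sum>A\<in>{A. A \<subseteq> {..<length vs} \<and> card A = 2}. lhat_term vs A M)
   = (\<Sum>s\<le>length vs. lhat_alpha_part a b ((!) vs) (length vs) s ({..<length vs} - {p}) M
        / of_nat (fact s))"
proof -
  let ?k = "length vs" and ?B = "{..<length vs} - {p}" and ?v = "(!) vs"
  define X1 where "X1 s = partition_sum_upd ?v ?k (Beta (a - 1) b) s ?B M" for s
  define X2 where "X2 s = partition_sum_upd ?v ?k (Beta a (b - 1)) s ?B M" for s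
  define X3 where "X3 t s = partition_sum_upd ?v ?k (bracket_gen a b (vs ! t)) s (?B - {t}) M" for t s
  have B: "?B \<subseteq> {..<?k}" "card ?B < ?k" "\<forall>j\<in>?B. is_beta (vs ! j)"
    and Bt: "?B - {t} \<subseteq> {..<?k}" "card (?B - {t}) < ?k" "\<forall>j\<in>?B - {t}. is_beta (vs ! j)" for t
    using alpha betas card_Diff1_le[of ?B t] by auto
  have "(\<Sum>s\<le>?k. lhat_alpha_part a b ?v ?k s ?B M / of_nat (fact s))
      = of_nat b * (\<Sum>s\<le>?k. X1 s / of_nat (fact s)) - of_nat a * (\<Sum>s\<le>?k. X2 s / of_nat (fact s))
        + (\<Sum>t\<in>?B. bracket_coeff a b (vs ! t) * (\<Sum>s\<le>?k. X3 t s / of_nat (fact s)))"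
    by (simp add: lhat_alpha_part_def X1_def X2_def X3_def add_divide_distrib diff_divide_distrib
        sum.distrib sum_subtractf sum_distrib_left sum_divide_distrib sum.swap[of _ "{..?k}" ?B])
  also have "\<dots> = (\<Sum>A\<in>{A. A \<subseteq> {..<?k} \<and> card A = 1}. lhat_term vs A M)
      + (\<Sum>A\<in>{A. A \<subseteq> {..<?k} \<and> card A = 2}. lhat_term vs A M)"
    unfolding sum_lhat_term_singletons sum_lhat_term_pairs
    using Phihat_eps_tilde_Cons_betas[OF B] Phihat_eps_tilde_Cons_betas[OF Bt]
    by (simp add: X1_def X2_def X3_def bracket_gen_def)
  finally show ?thesis by simp
qed

lemma Phihat_lhat_one_alpha:
  assumes "1 \<le> a" "1 \<le> b"
  shows "Phihat_lhat eps_tilde vs M = 0"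
proof -
  let ?k = "length vs" and ?B = "{..<length vs} - {p}" and ?v = "(!) vs"
  have koszul: "koszul vs \<sigma> = 1" if "\<sigma> \<in> Defs.shuffles i ?k" for i \<sigma>
    using that betas by (intro koszul_eq_1_if_one_odd) (auto simp: shuffles_def)
  have "Phihat_lhat eps_tilde vs M
      = (\<Sum>s\<le>?k. lhat_alpha_part a b ?v ?k s ?B M / of_nat (fact s))"
    using Phihat_lhat_eq_sum_lhat_term[OF koszul] sum_lhat_term_eq_1_2
      sum_lhat_term_1_2_eq_lhat_alpha_part by simp
  also have "\<dots> = 0"
  proof (intro sum.neutral ballI)
    fix s
    have "lhat_alpha_part a b ?v ?k s ?B M = 0"
      using betas by (intro lhat_alpha_part_eq_0[of ?B ?k ?v, OF _ _ _ assms]) auto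
    then show "lhat_alpha_part a b ?v ?k s ?B M / of_nat (fact s) = 0" by simp
  qed
  finally show ?thesis .
qed

end

lemma Phihat_lhat_not_one_alpha:
  assumes "card {q. q < length vs \<and> \<not> is_beta (vs ! q)} \<noteq> 1"
  shows "Phihat_lhat eps_tilde vs M = 0"
  unfolding Phihat_lhat_def
proof (intro sum.neutral ballI)
  fix i \<sigma> assume "\<sigma> \<in> Defs.shuffles i (length vs)"
  then have p: "\<sigma> permutes {..<length vs}" by (simp add: shuffles_def)
  let ?xs = "take i (Permutations.permute_list \<sigma> vs)"
  let ?ys = "drop i (Permutations.permute_list \<sigma> vs)"
  have "mset (?xs @ ?ys) = mset vs" using p by simp
  then have "length (filter (\<lambda>g. \<not> is_beta g) (?xs @ ?ys)) = length (filter (\<lambda>g. \<not> is_beta g) vs)"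
    by (metis mset_filter size_mset)
  then have count: "length (filter (\<lambda>g. \<not> is_beta g) (?xs @ ?ys)) \<noteq> 1"
    using assms by (simp add: length_filter_conv_card)
  have "(\<lambda>(c, g). c * Phihat eps_tilde (g # ?ys) M) x = 0" if x_mem: "x \<in> set (ellV ?xs)" for x
  proof -
    obtain c g where x: "x = (c, g)" by force
    then obtain h where "h \<in> set (g # ?ys)" "\<not> is_beta h"
      using ellV_keeps_alpha[OF count, of c g] x_mem x by auto
    then show ?thesis using x Phihat_eps_tilde_eq_0_if_alpha by simp
  qed
  then have terms_0: "map (\<lambda>(c, g). c * Phihat eps_tilde (g # ?ys) M) (ellV ?xs)
      = map (\<lambda>_. 0) (ellV ?xs)"
    by (intro map_cong) auto
  show "koszul vs \<sigma> * sum_list (map (\<lambda>(c, g). c * Phihat eps_tilde (g # drop i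
      (Defs.permute_list \<sigma> vs)) M) (ellV (take i (Defs.permute_list \<sigma> vs)))) = 0"
    unfolding Defs_permute_list_eq terms_0 by simp
qed

lemma Phihat_lhat_eps_tilde_eq_0:
  assumes "\<forall>g\<in>set vs. valid_gen g"
  shows "Phihat_lhat eps_tilde vs M = 0"
proof (cases "card {q. q < length vs \<and> \<not> is_beta (vs ! q)} = 1")
  case True
  then obtain p where p: "{q. q < length vs \<and> \<not> is_beta (vs ! q)} = {p}"
    by (auto simp: card_1_singleton_iff)
  then have "p < length vs" "\<not> is_beta (vs ! p)" by auto
  moreover from this obtain a b where "vs ! p = Alpha a b" by (cases "vs ! p") auto
  moreover have "1 \<le> a" "1 \<le> b" using assms calculation by (metis nth_mem valid_gen.simps(1))+
  moreover have "\<forall>q<length vs. q \<noteq> p \<longrightarrow> is_beta (vs ! q)" using p by auto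
  ultimately show ?thesis by (intro Phihat_lhat_one_alpha)
next
  case False
  then show ?thesis by (rule Phihat_lhat_not_one_alpha)
qed

lemma deg_sum_betas:
  "\<forall>g\<in>set vs. is_beta g \<Longrightarrow>
   sum_list (map deg vs) = - 2 * int (length vs) - 2 * int (sum_list (map (\<lambda>g. idx1 g + idx2 g) vs))"
proof (induction vs)
  case (Cons g vs)
  then obtain i j where "g = Beta i j" by (auto elim: is_betaE)
  then show ?case using Cons by simp
qed simp

lemma eps_tilde_degree:
  assumes "vs \<noteq> []" "\<forall>g\<in>set vs. valid_gen g" "(c, m) \<in> set (eps_tilde vs)"
  shows "1 \<le> m \<and> degC m = sum_list (map deg vs)"
proof -
  have betas: "\<forall>g\<in>set vs. is_beta g" using assms(3) by (auto simp: eps_tilde_def split: if_splits)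
  define S where "S = sum_list (map (\<lambda>g. idx1 g + idx2 g) vs)"
  obtain g rest where vs: "vs = g # rest" using assms(1) by (cases vs) auto
  then obtain i j where "g = Beta i j" using betas by (auto elim: is_betaE)
  then have "1 \<le> S" using assms(2) vs by (auto simp: S_def)
  moreover have "m = S + length vs - 1"
    using assms(1,3) betas by (simp add: eps_tilde_def S_def)
  ultimately show ?thesis
    using vs unfolding deg_sum_betas[OF betas] degC_def S_def[symmetric] by (simp add: of_nat_diff)
qed

lemma eps_tilde_permute:
  assumes "\<sigma> permutes {..<length vs}"
  shows "coeffC (eps_tilde (Defs.permute_list \<sigma> vs)) m = koszul vs \<sigma> * coeffC (eps_tilde vs) m"
proof (cases "\<forall>g\<in>set vs. is_beta g")
  case True
  have "mset (Permutations.permute_list \<sigma> vs) = mset vs" using assms by simp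
  then have sums: "sum_list (map f (Permutations.permute_list \<sigma> vs)) = sum_list (map f vs)"
    for f :: "gen \<Rightarrow> nat"
    by (metis mset_map sum_mset_sum_list)
  have "Permutations.permute_list \<sigma> vs \<noteq> [] \<longleftrightarrow> vs \<noteq> []"
    by (metis length_0_conv length_permute_list)
  then have "eps_tilde (Permutations.permute_list \<sigma> vs) = eps_tilde vs"
    unfolding eps_tilde_def sums set_permute_list[OF assms] length_permute_list by simp
  moreover have "koszul vs \<sigma> = 1"
    using assms True by (intro koszul_eq_1_if_one_odd) auto
  ultimately show ?thesis by simp
next
  case False
  then have "eps_tilde (Permutations.permute_list \<sigma> vs) = []" "eps_tilde vs = []"
    using assms by (auto simp: eps_tilde_def)
  then show ?thesis by (simp add: coeffC_def)
qed

theorem mainTheorem15: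
  shows "Linf_hom_V_Co eps_tilde"
  unfolding Linf_hom_V_Co_def
  using eps_tilde_degree eps_tilde_permute Phihat_lhat_eps_tilde_eq_0 by fast

end
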